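(* Let $\sigma_0$ be uniform on $Q$ and $m(k)=\mathbf E[\sigma_0^k]$ for $k\in\{0,1,\dots\}$. Let $v_1,\dots,v_k\in\mathsf V$ be distinct and $r_1,\dots,r_k\in\{0,1,\dots\}$. Then $$\mathbf E\big[\sigma(v_1)^{r_1}\cdots\sigma(v_k)^{r_k}\big]=\sum_{\mathcal P}\mathbf P(\pi(\omega)=\mathcal P)\prod_{A\in\mathcal P}m\Big(\sum_{v_j\in A}r_j\Big),$$ where the sum runs over all partitions $\mathcal P$ of $\{v_1,\dots,v_k\}$ such that $\sum_{v_j\in A}r_j$ is even for every $A\in\mathcal P$. In particular $\mathbf E[\sigma(v_1)\sigma(v_2)]=m(2)\,\mathbf P(v_1\leftrightarrow v_2)$, where $\{v_1\leftrightarrow v_2\}$ is the event that $v_1$ and $v_2$ lie in the same cluster of $\omega$.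
   Context: Let $M$ be a compact orientable surface without boundary, or the plane. Let $\mathsf G=(\mathsf V,\mathsf E)$ be a finite connected graph embedded in $M$ with all faces topological discs, and $\mathsf G^*=(\mathsf U,\mathsf E^* )$ its embedded dual ($\mathsf U$ = faces of $\mathsf G$); $e^*$ is the dual edge crossing $e$, $\xi^*=\{e^*:e\in\xi\}$. Fix integers $q,q'\ge1$, finite $Q\subset\mathbb R$, $Q'\subset\mathbb C$ with $Q=-Q$, $Q'=-Q'$, $|Q|=q$, $|Q'|=q'$, and $a,b\in(0,1]$. For $\sigma:\mathsf V\to Q$, $\eta(\sigma)\subseteq\mathsf E^*$ is the set of $e^*$ whose primal $e$ has endpoints with different $\sigma$-values; for $\sigma':\mathsf U\to Q'$, $\eta(\sigma')\subseteq\mathsf E$ is the set of $e$ whose dual $e^*$ has endpoints with different $\sigma'$-values. $\mathbf P(\sigma,\sigma')\propto a^{|\eta(\sigma')|}b^{|\eta(\sigma)|}$ on $\Sigma=\{(\sigma,\sigma'):\eta(\sigma)^*\cap\eta(\sigma')=\emptyset\}$. Percolation: given $(\sigma,\sigma')$, every edge of $\eta(\sigma')$ and every dual edge of $\eta(\sigma)$ is open; for each pair $(e,e^* )$ with $e\notin\eta(\sigma')$, $e^*\notin\eta(\sigma)$, independently: if $a+b\le1$, ($e$ open, $e^*$ closed) w.p. $a$, ($e$ closed, $e^*$ open) w.p. $b$, both open w.p. $1-a-b$; if $a+b\ge1$, ($e$ open, $e^*$ closed) w.p. $1-b$, ($e$ closed, $e^*$ open) w.p. $1-a$, both closed w.p.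 $a+b-1$. $\omega$ is the set of open primal edges; $\mathbf P,\mathbf E$ refer to the joint law. Clusters of $\omega$ are the connected components of $(\mathsf V,\omega)$, and $\pi(\omega)$ is the partition of $\{v_1,\dots,v_k\}$ induced by the clusters of $\omega$. *)

theory Defs
  imports Complex_Main "HOL-Library.FuncSet" "HOL-Library.Disjoint_Sets"
begin

(* A cellularly embedded connected graph on a compact orientable surface is encoded
   (equivalently, by the Heffter-Edmonds-Ringel rotation principle) by a combinatorial map:
   a finite set D of darts (half-edges), a fixed-point-free involution alpha (the two darts
   of an edge) and a permutation phi (rotation of darts around a vertex).
   The dual edge e* of the edge {d, alpha d} joins the faces of d and alpha d; we index
   dual edges by their primal edge. *)

definition orb :: "('d \<Rightarrow> 'd) \<Rightarrow> 'd \<Rightarrow> 'd set" where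
  "orb f d = range (\<lambda>n. (f ^^ n) d)"

definition verts :: "'d set \<Rightarrow> ('d \<Rightarrow> 'd) \<Rightarrow> 'd set set" where
  "verts D \<phi> = orb \<phi> ` D"

definition faces :: "'d set \<Rightarrow> ('d \<Rightarrow> 'd) \<Rightarrow> ('d \<Rightarrow> 'd) \<Rightarrow> 'd set set" where
  "faces D \<alpha> \<phi> = orb (\<phi> \<circ> \<alpha>) ` D"

definition edges :: "'d set \<Rightarrow> ('d \<Rightarrow> 'd) \<Rightarrow> 'd set set" where
  "edges D \<alpha> = (\<lambda>d. {d, \<alpha> d}) ` D"

definition comb_map :: "'d set \<Rightarrow> ('d \<Rightarrow> 'd) \<Rightarrow> ('d \<Rightarrow> 'd) \<Rightarrow> bool" where
  "comb_map D \<alpha> \<phi> \<longleftrightarrow> finite D \<and> D \<noteq> {} \<and> bij_betw \<alpha> D D \<and> bij_betw \<phi> D D \<and>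
     (\<forall>d\<in>D. \<alpha> (\<alpha> d) = d \<and> \<alpha> d \<noteq> d) \<and>
     (\<forall>d\<in>D. \<forall>d'\<in>D. (d, d') \<in> ({(x, \<alpha> x) | x. x \<in> D} \<union> {(x, \<phi> x) | x. x \<in> D})\<^sup>*)"

definition eta_spin :: "'d set \<Rightarrow> ('d \<Rightarrow> 'd) \<Rightarrow> ('d \<Rightarrow> 'd) \<Rightarrow> ('d set \<Rightarrow> real) \<Rightarrow> 'd set set" where
  "eta_spin D \<alpha> \<phi> \<sigma> = {{d, \<alpha> d} | d. d \<in> D \<and> \<sigma> (orb \<phi> d) \<noteq> \<sigma> (orb \<phi> (\<alpha> d))}"

definition eta_dual :: "'d set \<Rightarrow> ('d \<Rightarrow> 'd) \<Rightarrow> ('d \<Rightarrow> 'd) \<Rightarrow> ('d set \<Rightarrow> complex) \<Rightarrow> 'd set set" where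
  "eta_dual D \<alpha> \<phi> \<tau> = {{d, \<alpha> d} | d. d \<in> D \<and> \<tau> (orb (\<phi> \<circ> \<alpha>) d) \<noteq> \<tau> (orb (\<phi> \<circ> \<alpha>) (\<alpha> d))}"

definition spin_weight :: "'d set \<Rightarrow> ('d \<Rightarrow> 'd) \<Rightarrow> ('d \<Rightarrow> 'd) \<Rightarrow> real \<Rightarrow> real \<Rightarrow>
    ('d set \<Rightarrow> real) \<Rightarrow> ('d set \<Rightarrow> complex) \<Rightarrow> real" where
  "spin_weight D \<alpha> \<phi> a b \<sigma> \<tau> =
     (if eta_spin D \<alpha> \<phi> \<sigma> \<inter> eta_dual D \<alpha> \<phi> \<tau> = {}
      then a ^ card (eta_dual D \<alpha> \<phi> \<tau>) * b ^ card (eta_spin D \<alpha> \<phi> \<sigma>) else 0)"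

definition partition_fn :: "'d set \<Rightarrow> ('d \<Rightarrow> 'd) \<Rightarrow> ('d \<Rightarrow> 'd) \<Rightarrow> real set \<Rightarrow> complex set \<Rightarrow>
    real \<Rightarrow> real \<Rightarrow> real" where
  "partition_fn D \<alpha> \<phi> Q Q' a b =
     (\<Sum>\<sigma>\<in>PiE (verts D \<phi>) (\<lambda>_. Q). \<Sum>\<tau>\<in>PiE (faces D \<alpha> \<phi>) (\<lambda>_. Q'). spin_weight D \<alpha> \<phi> a b \<sigma> \<tau>)"

(* conditional probability of the state (e open = o, dual edge open = os) of an edge pair,
   given whether e \<in> eta(sigma') and whether the dual edge is in eta(sigma) *)
definition edge_kernel :: "real \<Rightarrow> real \<Rightarrow> bool \<Rightarrow> bool \<Rightarrow> bool \<Rightarrow> bool \<Rightarrow> real" where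
  "edge_kernel a b inD inS oe os =
     (if inD then (if oe \<and> \<not> os then 1 else 0)
      else if inS then (if \<not> oe \<and> os then 1 else 0)
      else if a + b \<le> 1 then
        (if oe \<and> \<not> os then a else if \<not> oe \<and> os then b else if oe \<and> os then 1 - a - b else 0)
      else
        (if oe \<and> \<not> os then 1 - b else if \<not> oe \<and> os then 1 - a else if \<not> oe \<and> \<not> os then a + b - 1 else 0))"

definition joint_prob :: "'d set \<Rightarrow> ('d \<Rightarrow> 'd) \<Rightarrow> ('d \<Rightarrow> 'd) \<Rightarrow> real set \<Rightarrow> complex set \<Rightarrow>
    real \<Rightarrow> real \<Rightarrow> ('d set \<Rightarrow> real) \<Rightarrow> ('d set \<Rightarrow> complex) \<Rightarrow> 'd set set \<Rightarrow> 'd set set \<Rightarrow> real" where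
  "joint_prob D \<alpha> \<phi> Q Q' a b \<sigma> \<tau> \<omega> \<omega>s =
     spin_weight D \<alpha> \<phi> a b \<sigma> \<tau> / partition_fn D \<alpha> \<phi> Q Q' a b *
     (\<Prod>e\<in>edges D \<alpha>. edge_kernel a b (e \<in> eta_dual D \<alpha> \<phi> \<tau>) (e \<in> eta_spin D \<alpha> \<phi> \<sigma>) (e \<in> \<omega>) (e \<in> \<omega>s))"

definition expect :: "'d set \<Rightarrow> ('d \<Rightarrow> 'd) \<Rightarrow> ('d \<Rightarrow> 'd) \<Rightarrow> real set \<Rightarrow> complex set \<Rightarrow>
    real \<Rightarrow> real \<Rightarrow> (('d set \<Rightarrow> real) \<Rightarrow> 'd set set \<Rightarrow> real) \<Rightarrow> real" where
  "expect D \<alpha> \<phi> Q Q' a b F =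
     (\<Sum>\<sigma>\<in>PiE (verts D \<phi>) (\<lambda>_. Q). \<Sum>\<tau>\<in>PiE (faces D \<alpha> \<phi>) (\<lambda>_. Q').
      \<Sum>\<omega>\<in>Pow (edges D \<alpha>). \<Sum>\<omega>s\<in>Pow (edges D \<alpha>).
        joint_prob D \<alpha> \<phi> Q Q' a b \<sigma> \<tau> \<omega> \<omega>s * F \<sigma> \<omega>)"

definition open_adj :: "'d set \<Rightarrow> ('d \<Rightarrow> 'd) \<Rightarrow> ('d \<Rightarrow> 'd) \<Rightarrow> 'd set set \<Rightarrow> ('d set \<times> 'd set) set" where
  "open_adj D \<alpha> \<phi> \<omega> = {(orb \<phi> d, orb \<phi> (\<alpha> d)) | d. d \<in> D \<and> {d, \<alpha> d} \<in> \<omega>}"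

definition connected_in :: "'d set \<Rightarrow> ('d \<Rightarrow> 'd) \<Rightarrow> ('d \<Rightarrow> 'd) \<Rightarrow> 'd set set \<Rightarrow> 'd set \<Rightarrow> 'd set \<Rightarrow> bool" where
  "connected_in D \<alpha> \<phi> \<omega> u v \<longleftrightarrow> (u, v) \<in> (open_adj D \<alpha> \<phi> \<omega>)\<^sup>*"

definition cluster_partition :: "'d set \<Rightarrow> ('d \<Rightarrow> 'd) \<Rightarrow> ('d \<Rightarrow> 'd) \<Rightarrow> 'd set set \<Rightarrow> 'd set set \<Rightarrow> 'd set set set" where
  "cluster_partition D \<alpha> \<phi> \<omega> S = (\<lambda>u. {v \<in> S. connected_in D \<alpha> \<phi> \<omega> u v}) ` S"

definition moment :: "real set \<Rightarrow> nat \<Rightarrow> real" where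
  "moment Q k = (\<Sum>x\<in>Q. x ^ k) / real (card Q)"

end

theory Submission imports Defs begin

text \<open>Summing out the state of each dual edge, the joint weight of (\<sigma>, \<sigma>', \<omega>) factorises into
  a weight of (\<sigma>', \<omega>) times the indicator that no open edge of \<omega> lies in \<eta>(\<sigma>), i.e. that \<sigma> is
  constant on the clusters of \<omega>. So, given \<omega>, the spin \<sigma> takes independent uniform values in Q on
  the clusters, and the conditional expectation of the monomial \<Prod> \<sigma>(v_j)^r_j is the product, over
  the blocks A of \<pi>(\<omega>), of the moments m(\<Sum> r_j), the sum taken over v_j \<in> A. As Q = -Q, odd
  moments vanish, which leaves only the partitions with even blocks; for two points the
  single-block partition is the only one.\<close>

lemma sum_Pow_prod_bool:
  fixes g :: "'a \<Rightarrow> bool \<Rightarrow> 'b::comm_semiring_1"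
  assumes "finite A"
  shows "(\<Sum>S\<in>Pow A. \<Prod>e\<in>A. g e (e \<in> S)) = (\<Prod>e\<in>A. g e True + g e False)"
proof -
  have "(\<Prod>e\<in>A. g e (e \<in> S)) = (\<Prod>e\<in>S. g e True) * (\<Prod>e\<in>A - S. g e False)" if "S \<in> Pow A" for S
  proof -
    have "(\<Prod>e\<in>A. g e (e \<in> S)) = (\<Prod>e\<in>A. if e \<in> S then g e True else g e False)"
      by (rule prod.cong) auto
    also have "\<dots> = (\<Prod>e\<in>A \<inter> S. g e True) * (\<Prod>e\<in>A - S. g e False)"
      using prod.If_cases[OF assms, of "\<lambda>e. e \<in> S"] by (simp add: Diff_eq)
    finally show ?thesis using that by (simp add: Int_absorb1)
  qed
  then show ?thesis by (simp add: prod_add[OF assms])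
qed

lemma prod_if_eq_0:
  fixes f :: "'a \<Rightarrow> 'b::comm_semiring_1"
  assumes "finite A"
  shows "(\<Prod>e\<in>A. if P e then 0 else f e) = (if \<exists>e\<in>A. P e then 0 else prod f A)"
proof (cases "\<exists>e\<in>A. P e")
  case True
  then show ?thesis using assms by (auto intro!: prod_zero)
qed (auto intro!: prod.cong)

lemma moment_0: "finite Q \<Longrightarrow> Q \<noteq> {} \<Longrightarrow> moment Q 0 = 1"
  by (simp add: moment_def)

lemma sum_power_eq_card_mult_moment: "finite Q \<Longrightarrow> (\<Sum>x\<in>Q. x ^ n) = real (card Q) * moment Q n"
  by (cases "Q = {}") (auto simp: moment_def)

lemma moment_odd_eq_0:
  assumes "finite Q" "uminus ` Q = Q" "odd n"
  shows "moment Q n = 0"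
proof -
  have "(\<Sum>x\<in>Q. x ^ n) = (\<Sum>x\<in>uminus ` Q. x ^ n)" using assms by simp
  also have "\<dots> = (\<Sum>x\<in>Q. (- x) ^ n)" by (subst sum.reindex) (auto simp: inj_on_def)
  also have "\<dots> = - (\<Sum>x\<in>Q. x ^ n)" using assms by (simp add: sum_negf)
  finally have "(\<Sum>x\<in>Q. x ^ n) = 0" by simp
  then show ?thesis by (simp add: moment_def)
qed

definition spin_weight_factor :: "real \<Rightarrow> real \<Rightarrow> bool \<Rightarrow> bool \<Rightarrow> real" where
  "spin_weight_factor a b inD inS =
     (if inD \<and> inS then 0 else (if inD then a else 1) * (if inS then b else 1))"

definition primal_edge_weight :: "real \<Rightarrow> real \<Rightarrow> bool \<Rightarrow> bool \<Rightarrow> real" where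
  "primal_edge_weight a b inD oe = (if oe then (if inD then a else 1 - b) else (if inD then 0 else b))"

text \<open>Both regimes \<open>a + b \<le> 1\<close> and \<open>a + b \<ge> 1\<close> give the same marginal, and \<open>\<sigma>\<close> survives only
  through the constraint that an open edge does not lie in \<open>\<eta>(\<sigma>)\<close>.\<close>
lemma spin_weight_factor_mult_sum_dual_states:
  "spin_weight_factor a b inD inS * (edge_kernel a b inD inS oe True + edge_kernel a b inD inS oe False) =
     (if oe \<and> inS then 0 else primal_edge_weight a b inD oe)"
  by (cases inD; cases inS; cases oe) (simp_all add: spin_weight_factor_def primal_edge_weight_def edge_kernel_def)

lemma partition_on_doubleton_even_blocks:
  assumes "x \<noteq> y" and "partition_on {x, y} P"
    and "\<forall>A\<in>P. even ((if x \<in> A then 1 else 0) + (if y \<in> A then 1 else 0 :: nat))"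
  shows "P = {{x, y}}"
proof -
  have "A = {x, y}" if "A \<in> P" for A
  proof -
    have "A \<noteq> {}" "A \<subseteq> {x, y}"
      using assms(2) that by (auto simp: partition_on_def)
    then show ?thesis using assms(3) that by (cases "x \<in> A"; cases "y \<in> A") auto
  qed
  moreover have "P \<noteq> {}" using assms(2) by (auto simp: partition_on_def)
  ultimately show ?thesis by blast
qed

locale involutive_darts =
  fixes D :: "'d set" and \<alpha> \<phi> :: "'d \<Rightarrow> 'd"
  assumes finite_darts: "finite D"
    and involution_closed: "\<And>d. d \<in> D \<Longrightarrow> \<alpha> d \<in> D"
    and involution: "\<And>d. d \<in> D \<Longrightarrow> \<alpha> (\<alpha> d) = d"
begin

lemma finite_verts: "finite (verts D \<phi>)"
  using finite_darts by (simp add: verts_def)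

lemma finite_edges: "finite (edges D \<alpha>)"
  using finite_darts by (simp add: edges_def)

lemma eta_spin_subset_edges: "eta_spin D \<alpha> \<phi> \<sigma> \<subseteq> edges D \<alpha>"
  by (auto simp: eta_spin_def edges_def)

lemma eta_dual_subset_edges: "eta_dual D \<alpha> \<phi> \<tau> \<subseteq> edges D \<alpha>"
  by (auto simp: eta_dual_def edges_def)

lemma edge_in_eta_spin_iff:
  assumes "d \<in> D"
  shows "{d, \<alpha> d} \<in> eta_spin D \<alpha> \<phi> \<sigma> \<longleftrightarrow> \<sigma> (orb \<phi> d) \<noteq> \<sigma> (orb \<phi> (\<alpha> d))"
proof
  assume "{d, \<alpha> d} \<in> eta_spin D \<alpha> \<phi> \<sigma>"
  then obtain d' where d': "{d, \<alpha> d} = {d', \<alpha> d'}" "\<sigma> (orb \<phi> d') \<noteq> \<sigma> (orb \<phi> (\<alpha> d'))"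
    by (auto simp: eta_spin_def)
  then have "(d = d' \<and> \<alpha> d = \<alpha> d') \<or> (d = \<alpha> d' \<and> \<alpha> d = d')"
    by (auto simp: doubleton_eq_iff)
  then show "\<sigma> (orb \<phi> d) \<noteq> \<sigma> (orb \<phi> (\<alpha> d))" using d' by metis
qed (use assms in \<open>auto simp: eta_spin_def\<close>)

lemma open_adj_in_verts: "(x, y) \<in> open_adj D \<alpha> \<phi> \<omega> \<Longrightarrow> x \<in> verts D \<phi> \<and> y \<in> verts D \<phi>"
  by (auto simp: open_adj_def verts_def involution_closed)

lemma open_adj_sym: "(x, y) \<in> open_adj D \<alpha> \<phi> \<omega> \<Longrightarrow> (y, x) \<in> open_adj D \<alpha> \<phi> \<omega>"
proof -
  assume "(x, y) \<in> open_adj D \<alpha> \<phi> \<omega>"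
  then obtain d where d: "x = orb \<phi> d" "y = orb \<phi> (\<alpha> d)" "d \<in> D" "{d, \<alpha> d} \<in> \<omega>"
    by (auto simp: open_adj_def)
  then have "{\<alpha> d, \<alpha> (\<alpha> d)} \<in> \<omega>" "x = orb \<phi> (\<alpha> (\<alpha> d))"
    using involution[of d] by (simp_all add: insert_commute)
  then show "(y, x) \<in> open_adj D \<alpha> \<phi> \<omega>"
    using d involution_closed unfolding open_adj_def by blast
qed

lemma connected_in_sym: "connected_in D \<alpha> \<phi> \<omega> u v \<Longrightarrow> connected_in D \<alpha> \<phi> \<omega> v u"
  unfolding connected_in_def
proof (induction rule: rtrancl_induct)
  case (step y z)
  then show ?case using open_adj_sym by (meson converse_rtrancl_into_rtrancl)
qed simp

lemma connected_in_trans: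
  "connected_in D \<alpha> \<phi> \<omega> u v \<Longrightarrow> connected_in D \<alpha> \<phi> \<omega> v w \<Longrightarrow> connected_in D \<alpha> \<phi> \<omega> u w"
  unfolding connected_in_def by simp

lemma connected_in_verts: "connected_in D \<alpha> \<phi> \<omega> u v \<Longrightarrow> u \<in> verts D \<phi> \<Longrightarrow> v \<in> verts D \<phi>"
  unfolding connected_in_def by (induction rule: rtrancl_induct) (auto dest: open_adj_in_verts)

definition cluster :: "'d set set \<Rightarrow> 'd set \<Rightarrow> 'd set set" where
  "cluster \<omega> u = {w \<in> verts D \<phi>. connected_in D \<alpha> \<phi> \<omega> u w}"

lemma self_in_cluster: "u \<in> verts D \<phi> \<Longrightarrow> u \<in> cluster \<omega> u"
  by (simp add: cluster_def connected_in_def)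

lemma cluster_eq:
  "u \<in> verts D \<phi> \<Longrightarrow> connected_in D \<alpha> \<phi> \<omega> u w \<Longrightarrow> cluster \<omega> u = cluster \<omega> w"
  unfolding cluster_def using connected_in_sym connected_in_trans by blast

definition compatible :: "'d set set \<Rightarrow> ('d set \<Rightarrow> real) \<Rightarrow> bool" where
  "compatible \<omega> \<sigma> \<longleftrightarrow> \<omega> \<inter> eta_spin D \<alpha> \<phi> \<sigma> = {}"

definition compatible_spins :: "real set \<Rightarrow> 'd set set \<Rightarrow> ('d set \<Rightarrow> real) set" where
  "compatible_spins Q \<omega> = {\<sigma> \<in> PiE (verts D \<phi>) (\<lambda>_. Q). compatible \<omega> \<sigma>}"

lemma compatible_constant_on_clusters:
  assumes "compatible \<omega> \<sigma>" "connected_in D \<alpha> \<phi> \<omega> u w"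
  shows "\<sigma> u = \<sigma> w"
  using assms(2) unfolding connected_in_def
proof (induction rule: rtrancl_induct)
  case (step y z)
  then obtain d where d: "y = orb \<phi> d" "z = orb \<phi> (\<alpha> d)" "d \<in> D" "{d, \<alpha> d} \<in> \<omega>"
    by (auto simp: open_adj_def)
  then have "{d, \<alpha> d} \<notin> eta_spin D \<alpha> \<phi> \<sigma>" using assms(1) by (auto simp: compatible_def)
  then show ?case using edge_in_eta_spin_iff[OF d(3)] d step by simp
qed simp

lemma compatible_if_constant_on_clusters:
  assumes "\<And>u w. u \<in> verts D \<phi> \<Longrightarrow> connected_in D \<alpha> \<phi> \<omega> u w \<Longrightarrow> \<sigma> u = \<sigma> w"
  shows "compatible \<omega> \<sigma>"
  unfolding compatible_def
proof (rule ccontr)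
  assume "\<omega> \<inter> eta_spin D \<alpha> \<phi> \<sigma> \<noteq> {}"
  then obtain d where d: "d \<in> D" "{d, \<alpha> d} \<in> \<omega>" "{d, \<alpha> d} \<in> eta_spin D \<alpha> \<phi> \<sigma>"
    by (auto simp: eta_spin_def)
  then have "connected_in D \<alpha> \<phi> \<omega> (orb \<phi> d) (orb \<phi> (\<alpha> d))"
    by (auto simp: connected_in_def open_adj_def)
  moreover have "orb \<phi> d \<in> verts D \<phi>" using d by (simp add: verts_def)
  ultimately show False using assms d edge_in_eta_spin_iff by blast
qed

lemma bij_betw_cluster_spins:
  "bij_betw (\<lambda>f. restrict (\<lambda>u. f (cluster \<omega> u)) (verts D \<phi>))
     (PiE (cluster \<omega> ` verts D \<phi>) (\<lambda>_. Q)) (compatible_spins Q \<omega>)"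
proof (rule bij_betw_byWitness[where f' = "\<lambda>\<sigma>. restrict (\<lambda>c. \<sigma> (SOME w. w \<in> c)) (cluster \<omega> ` verts D \<phi>)"])
  let ?V = "verts D \<phi>" and ?K = "cluster \<omega> ` verts D \<phi>"
  have some_in_cluster: "connected_in D \<alpha> \<phi> \<omega> u (SOME w. w \<in> cluster \<omega> u)" "(SOME w. w \<in> cluster \<omega> u) \<in> ?V"
    if "u \<in> ?V" for u
    using someI[of "\<lambda>w. w \<in> cluster \<omega> u", OF self_in_cluster[OF that]] by (simp_all add: cluster_def)
  show "\<forall>f\<in>PiE ?K (\<lambda>_. Q). restrict (\<lambda>c. restrict (\<lambda>u. f (cluster \<omega> u)) ?V (SOME w. w \<in> c)) ?K = f"
  proof (intro ballI ext)
    fix f c assume f: "f \<in> PiE ?K (\<lambda>_. Q)"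
    show "restrict (\<lambda>c. restrict (\<lambda>u. f (cluster \<omega> u)) ?V (SOME w. w \<in> c)) ?K c = f c"
    proof (cases "c \<in> ?K")
      case True
      then obtain u where "u \<in> ?V" "c = cluster \<omega> u" by blast
      then have "cluster \<omega> (SOME w. w \<in> c) = c" "(SOME w. w \<in> c) \<in> ?V"
        using some_in_cluster cluster_eq by metis+
      then show ?thesis using True by simp
    qed (use PiE_arb[OF f] in simp)
  qed
  show "\<forall>\<sigma>\<in>compatible_spins Q \<omega>.
      restrict (\<lambda>u. restrict (\<lambda>c. \<sigma> (SOME w. w \<in> c)) ?K (cluster \<omega> u)) ?V = \<sigma>"
  proof (intro ballI ext)
    fix \<sigma> u assume "\<sigma> \<in> compatible_spins Q \<omega>"
    then have \<sigma>: "\<sigma> \<in> PiE ?V (\<lambda>_. Q)" "compatible \<omega> \<sigma>" by (simp_all add: compatible_spins_def)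
    show "restrict (\<lambda>u. restrict (\<lambda>c. \<sigma> (SOME w. w \<in> c)) ?K (cluster \<omega> u)) ?V u = \<sigma> u"
    proof (cases "u \<in> ?V")
      case True
      then have "\<sigma> u = \<sigma> (SOME w. w \<in> cluster \<omega> u)"
        using compatible_constant_on_clusters[OF \<sigma>(2) some_in_cluster(1)] by blast
      then show ?thesis using True by simp
    qed (use PiE_arb[OF \<sigma>(1)] in simp)
  qed
  show "(\<lambda>f. restrict (\<lambda>u. f (cluster \<omega> u)) ?V) ` PiE ?K (\<lambda>_. Q) \<subseteq> compatible_spins Q \<omega>"
  proof clarify
    fix f assume "f \<in> PiE ?K (\<lambda>_. Q)"
    moreover have "compatible \<omega> (restrict (\<lambda>u. f (cluster \<omega> u)) ?V)"
      using connected_in_verts cluster_eq by (intro compatible_if_constant_on_clusters) simp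
    ultimately show "restrict (\<lambda>u. f (cluster \<omega> u)) ?V \<in> compatible_spins Q \<omega>"
      by (auto simp: compatible_spins_def)
  qed
  show "(\<lambda>\<sigma>. restrict (\<lambda>c. \<sigma> (SOME w. w \<in> c)) ?K) ` compatible_spins Q \<omega> \<subseteq> PiE ?K (\<lambda>_. Q)"
    using some_in_cluster by (auto simp: compatible_spins_def)
qed

lemma sum_compatible_spins_monomial:
  fixes v :: "nat \<Rightarrow> 'd set" and r :: "nat \<Rightarrow> nat"
  assumes "finite Q" and v: "v ` {..<k} \<subseteq> verts D \<phi>"
  shows "(\<Sum>\<sigma>\<in>compatible_spins Q \<omega>. \<Prod>j<k. \<sigma> (v j) ^ r j) =
     real (card (compatible_spins Q \<omega>)) *
     (\<Prod>c\<in>cluster \<omega> ` verts D \<phi>. moment Q (\<Sum>j\<in>{j. j < k \<and> cluster \<omega> (v j) = c}. r j))"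
proof -
  let ?K = "cluster \<omega> ` verts D \<phi>"
  define R where "R c = (\<Sum>j\<in>{j. j < k \<and> cluster \<omega> (v j) = c}. r j)" for c
  note bij = bij_betw_cluster_spins[of \<omega> Q]
  have finite_K: "finite ?K" using finite_verts by simp
  have monomial: "(\<Prod>j<k. restrict (\<lambda>u. f (cluster \<omega> u)) (verts D \<phi>) (v j) ^ r j) = (\<Prod>c\<in>?K. f c ^ R c)"
    for f :: "'d set set \<Rightarrow> real"
  proof -
    have "(\<Prod>j<k. restrict (\<lambda>u. f (cluster \<omega> u)) (verts D \<phi>) (v j) ^ r j) =
        (\<Prod>j<k. f (cluster \<omega> (v j)) ^ r j)"
      using v by (intro prod.cong) auto
    also have "\<dots> = (\<Prod>c\<in>?K. \<Prod>j\<in>{j \<in> {..<k}. cluster \<omega> (v j) = c}. f (cluster \<omega> (v j)) ^ r j)"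
      using v finite_K by (intro prod.group[symmetric]) auto
    also have "\<dots> = (\<Prod>c\<in>?K. f c ^ R c)"
      unfolding R_def power_sum by (intro prod.cong refl) auto
    finally show ?thesis .
  qed
  have "(\<Sum>\<sigma>\<in>compatible_spins Q \<omega>. \<Prod>j<k. \<sigma> (v j) ^ r j) = (\<Sum>f\<in>PiE ?K (\<lambda>_. Q). \<Prod>c\<in>?K. f c ^ R c)"
    by (simp only: sum.reindex_bij_betw[OF bij, symmetric] monomial)
  also have "\<dots> = (\<Prod>c\<in>?K. \<Sum>x\<in>Q. x ^ R c)"
    by (rule prod_sum_PiE[symmetric]) (use finite_K assms(1) in auto)
  also have "\<dots> = real (card Q) ^ card ?K * (\<Prod>c\<in>?K. moment Q (R c))"
    using assms(1) by (simp add: sum_power_eq_card_mult_moment prod.distrib)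
  also have "real (card Q) ^ card ?K = real (card (compatible_spins Q \<omega>))"
    using bij_betw_same_card[OF bij] finite_K by (simp add: card_PiE)
  finally show ?thesis by (simp add: R_def)
qed

lemma mem_cluster_iff:
  "u \<in> verts D \<phi> \<Longrightarrow> w \<in> verts D \<phi> \<Longrightarrow> w \<in> cluster \<omega> u \<longleftrightarrow> cluster \<omega> w = cluster \<omega> u"
  using cluster_eq self_in_cluster by (auto simp: cluster_def)

lemma cluster_partition_eq_image:
  assumes "S \<subseteq> verts D \<phi>"
  shows "cluster_partition D \<alpha> \<phi> \<omega> S = (\<lambda>c. c \<inter> S) ` cluster \<omega> ` S"
  unfolding cluster_partition_def image_image
  using assms by (intro image_cong) (auto simp: cluster_def)

lemma partition_on_cluster_partition:
  "partition_on S (cluster_partition D \<alpha> \<phi> \<omega> S)"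
  unfolding partition_on_def
proof (intro conjI)
  show "\<Union> (cluster_partition D \<alpha> \<phi> \<omega> S) = S" "{} \<notin> cluster_partition D \<alpha> \<phi> \<omega> S"
    by (auto simp: cluster_partition_def connected_in_def)
  show "disjoint (cluster_partition D \<alpha> \<phi> \<omega> S)"
  proof (rule disjointI)
    fix A B assume "A \<in> cluster_partition D \<alpha> \<phi> \<omega> S" "B \<in> cluster_partition D \<alpha> \<phi> \<omega> S" "A \<noteq> B"
    then obtain u u' where A: "A = {w \<in> S. connected_in D \<alpha> \<phi> \<omega> u w}"
      and B: "B = {w \<in> S. connected_in D \<alpha> \<phi> \<omega> u' w}"
      by (auto simp: cluster_partition_def)
    show "A \<inter> B = {}"
    proof (rule ccontr)
      assume "A \<inter> B \<noteq> {}"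
      then have "connected_in D \<alpha> \<phi> \<omega> u u'"
        unfolding A B using connected_in_sym connected_in_trans by blast
      then have "A = B"
        unfolding A B using connected_in_sym connected_in_trans by blast
      with \<open>A \<noteq> B\<close> show False by simp
    qed
  qed
qed

lemma prod_clusters_eq_prod_cluster_partition:
  fixes v :: "nat \<Rightarrow> 'd set" and r :: "nat \<Rightarrow> nat"
  assumes "finite Q" "Q \<noteq> {}" and v: "v ` {..<k} \<subseteq> verts D \<phi>"
  shows "(\<Prod>c\<in>cluster \<omega> ` verts D \<phi>. moment Q (\<Sum>j\<in>{j. j < k \<and> cluster \<omega> (v j) = c}. r j)) =
     (\<Prod>A\<in>cluster_partition D \<alpha> \<phi> \<omega> (v ` {..<k}). moment Q (\<Sum>j\<in>{j. j < k \<and> v j \<in> A}. r j))"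
proof -
  let ?S = "v ` {..<k}"
  let ?g = "\<lambda>c. moment Q (\<Sum>j\<in>{j. j < k \<and> cluster \<omega> (v j) = c}. r j)"
  have "?g c = 1" if "c \<notin> cluster \<omega> ` ?S" for c
  proof -
    have no_index: "{j. j < k \<and> cluster \<omega> (v j) = c} = {}" using that by auto
    show ?thesis by (simp only: no_index sum.empty moment_0[OF assms(1,2)])
  qed
  then have "(\<Prod>c\<in>cluster \<omega> ` verts D \<phi>. ?g c) = (\<Prod>c\<in>cluster \<omega> ` ?S. ?g c)"
    using v finite_verts by (intro prod.mono_neutral_right) auto
  also have "\<dots> = (\<Prod>c\<in>cluster \<omega> ` ?S. moment Q (\<Sum>j\<in>{j. j < k \<and> v j \<in> c \<inter> ?S}. r j))"
  proof (intro prod.cong refl arg_cong[where f = "moment Q"] sum.cong Collect_cong)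
    fix c j assume "c \<in> cluster \<omega> ` ?S"
    then obtain u where u: "u \<in> ?S" "c = cluster \<omega> u" by blast
    show "(j < k \<and> cluster \<omega> (v j) = c) \<longleftrightarrow> (j < k \<and> v j \<in> c \<inter> ?S)"
    proof (cases "j < k")
      case True
      then have "u \<in> verts D \<phi>" "v j \<in> verts D \<phi>" using u v by auto
      then show ?thesis using True u mem_cluster_iff[of u "v j" \<omega>] by auto
    qed simp
  qed
  also have "\<dots> = (\<Prod>A\<in>(\<lambda>c. c \<inter> ?S) ` cluster \<omega> ` ?S. moment Q (\<Sum>j\<in>{j. j < k \<and> v j \<in> A}. r j))"
  proof (rule prod.reindex[symmetric, unfolded comp_def], rule inj_onI)
    fix c c' assume "c \<in> cluster \<omega> ` ?S" "c' \<in> cluster \<omega> ` ?S" and eq: "c \<inter> ?S = c' \<inter> ?S"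
    then obtain u u' where u: "u \<in> ?S" "c = cluster \<omega> u" and u': "u' \<in> ?S" "c' = cluster \<omega> u'"
      by blast
    have "u \<in> verts D \<phi>" "u' \<in> verts D \<phi>" using u u' v by auto
    then have "u' \<in> c" using eq self_in_cluster u u' by blast
    then show "c = c'" using u u' mem_cluster_iff \<open>u \<in> verts D \<phi>\<close> \<open>u' \<in> verts D \<phi>\<close> by auto
  qed
  finally show ?thesis by (simp add: cluster_partition_eq_image[OF v])
qed

lemma spin_weight_eq_prod_edges:
  "spin_weight D \<alpha> \<phi> a b \<sigma> \<tau> =
     (\<Prod>e\<in>edges D \<alpha>. spin_weight_factor a b (e \<in> eta_dual D \<alpha> \<phi> \<tau>) (e \<in> eta_spin D \<alpha> \<phi> \<sigma>))"
proof -
  let ?E = "edges D \<alpha>" and ?ED = "eta_dual D \<alpha> \<phi> \<tau>" and ?ES = "eta_spin D \<alpha> \<phi> \<sigma>"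
  have power: "(\<Prod>e\<in>?E. if e \<in> B then c else 1) = c ^ card B" if "B \<subseteq> ?E" for B and c :: real
    using prod.inter_restrict[OF finite_edges, of "\<lambda>_. c" B] that by (simp add: Int_absorb1)
  have "(\<Prod>e\<in>?E. spin_weight_factor a b (e \<in> ?ED) (e \<in> ?ES)) =
      (\<Prod>e\<in>?E. (if e \<in> ?ED \<and> e \<in> ?ES then 0 else 1) *
         ((if e \<in> ?ED then a else 1) * (if e \<in> ?ES then b else 1)))"
    by (intro prod.cong) (auto simp: spin_weight_factor_def)
  also have "\<dots> = (\<Prod>e\<in>?E. if e \<in> ?ED \<and> e \<in> ?ES then 0 else 1) * (a ^ card ?ED * b ^ card ?ES)"
    by (simp add: prod.distrib power eta_dual_subset_edges eta_spin_subset_edges)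
  also have "(\<Prod>e\<in>?E. if e \<in> ?ED \<and> e \<in> ?ES then 0 else 1) = (if ?ES \<inter> ?ED = {} then 1 else (0::real))"
    using prod_if_eq_0[OF finite_edges, of "\<lambda>e. e \<in> ?ED \<and> e \<in> ?ES" "\<lambda>_. 1::real"] eta_spin_subset_edges
    by auto
  finally show ?thesis by (simp add: spin_weight_def)
qed

lemma sum_joint_prob_dual_states:
  assumes "\<omega> \<in> Pow (edges D \<alpha>)"
  shows "(\<Sum>\<omega>s\<in>Pow (edges D \<alpha>). joint_prob D \<alpha> \<phi> Q Q' a b \<sigma> \<tau> \<omega> \<omega>s) =
    (if compatible \<omega> \<sigma>
     then (\<Prod>e\<in>edges D \<alpha>. primal_edge_weight a b (e \<in> eta_dual D \<alpha> \<phi> \<tau>) (e \<in> \<omega>)) / partition_fn D \<alpha> \<phi> Q Q' a b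
     else 0)"
proof -
  let ?E = "edges D \<alpha>" and ?ED = "eta_dual D \<alpha> \<phi> \<tau>" and ?ES = "eta_spin D \<alpha> \<phi> \<sigma>"
  let ?K = "\<lambda>e. edge_kernel a b (e \<in> ?ED) (e \<in> ?ES) (e \<in> \<omega>)"
  have "(\<Sum>\<omega>s\<in>Pow ?E. joint_prob D \<alpha> \<phi> Q Q' a b \<sigma> \<tau> \<omega> \<omega>s) =
      spin_weight D \<alpha> \<phi> a b \<sigma> \<tau> * (\<Sum>\<omega>s\<in>Pow ?E. \<Prod>e\<in>?E. ?K e (e \<in> \<omega>s)) / partition_fn D \<alpha> \<phi> Q Q' a b"
    by (simp add: joint_prob_def sum_distrib_left sum_divide_distrib)
  also have "spin_weight D \<alpha> \<phi> a b \<sigma> \<tau> * (\<Sum>\<omega>s\<in>Pow ?E. \<Prod>e\<in>?E. ?K e (e \<in> \<omega>s)) =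
      (\<Prod>e\<in>?E. spin_weight_factor a b (e \<in> ?ED) (e \<in> ?ES) * (?K e True + ?K e False))"
    by (simp only: sum_Pow_prod_bool[where g = ?K, OF finite_edges] spin_weight_eq_prod_edges prod.distrib)
  also have "\<dots> = (\<Prod>e\<in>?E. if e \<in> \<omega> \<and> e \<in> ?ES then 0 else primal_edge_weight a b (e \<in> ?ED) (e \<in> \<omega>))"
    by (simp only: spin_weight_factor_mult_sum_dual_states)
  also have "\<dots> = (if compatible \<omega> \<sigma> then (\<Prod>e\<in>?E. primal_edge_weight a b (e \<in> ?ED) (e \<in> \<omega>)) else 0)"
    using assms by (auto simp: prod_if_eq_0[OF finite_edges] compatible_def)
  finally show ?thesis by simp
qed

definition percolation_weight :: "real set \<Rightarrow> complex set \<Rightarrow> real \<Rightarrow> real \<Rightarrow> 'd set set \<Rightarrow> real" where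
  "percolation_weight Q Q' a b \<omega> =
     (\<Sum>\<tau>\<in>PiE (faces D \<alpha> \<phi>) (\<lambda>_. Q'). \<Prod>e\<in>edges D \<alpha>. primal_edge_weight a b (e \<in> eta_dual D \<alpha> \<phi> \<tau>) (e \<in> \<omega>))
     / partition_fn D \<alpha> \<phi> Q Q' a b"

lemma expect_eq_sum_percolation_weight:
  assumes "finite Q"
  shows "expect D \<alpha> \<phi> Q Q' a b F =
    (\<Sum>\<omega>\<in>Pow (edges D \<alpha>). percolation_weight Q Q' a b \<omega> * (\<Sum>\<sigma>\<in>compatible_spins Q \<omega>. F \<sigma> \<omega>))"
proof -
  let ?E = "edges D \<alpha>" and ?VS = "PiE (verts D \<phi>) (\<lambda>_. Q)" and ?FS = "PiE (faces D \<alpha> \<phi>) (\<lambda>_. Q')"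
  define W where "W \<tau> \<omega> =
    (\<Prod>e\<in>?E. primal_edge_weight a b (e \<in> eta_dual D \<alpha> \<phi> \<tau>) (e \<in> \<omega>)) / partition_fn D \<alpha> \<phi> Q Q' a b" for \<tau> \<omega>
  have "expect D \<alpha> \<phi> Q Q' a b F = (\<Sum>\<sigma>\<in>?VS. \<Sum>\<tau>\<in>?FS. \<Sum>\<omega>\<in>Pow ?E.
      (\<Sum>\<omega>s\<in>Pow ?E. joint_prob D \<alpha> \<phi> Q Q' a b \<sigma> \<tau> \<omega> \<omega>s) * F \<sigma> \<omega>)"
    by (simp add: expect_def sum_distrib_right)
  also have "\<dots> = (\<Sum>\<sigma>\<in>?VS. \<Sum>\<tau>\<in>?FS. \<Sum>\<omega>\<in>Pow ?E. if compatible \<omega> \<sigma> then W \<tau> \<omega> * F \<sigma> \<omega> else 0)"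
    by (intro sum.cong refl) (simp add: sum_joint_prob_dual_states W_def)
  also have "\<dots> = (\<Sum>\<omega>\<in>Pow ?E. \<Sum>\<tau>\<in>?FS. \<Sum>\<sigma>\<in>?VS. if compatible \<omega> \<sigma> then W \<tau> \<omega> * F \<sigma> \<omega> else 0)"
    by (subst sum.swap, subst (2) sum.swap, subst sum.swap) (rule refl)
  also have "\<dots> = (\<Sum>\<omega>\<in>Pow ?E. \<Sum>\<tau>\<in>?FS. W \<tau> \<omega> * (\<Sum>\<sigma>\<in>compatible_spins Q \<omega>. F \<sigma> \<omega>))"
  proof (intro sum.cong refl)
    fix \<omega> \<tau>
    have "finite ?VS" using assms finite_verts by (simp add: finite_PiE)
    then have "(\<Sum>\<sigma>\<in>?VS. if compatible \<omega> \<sigma> then W \<tau> \<omega> * F \<sigma> \<omega> else 0) =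
        (\<Sum>\<sigma>\<in>compatible_spins Q \<omega>. W \<tau> \<omega> * F \<sigma> \<omega>)"
      unfolding compatible_spins_def by (rule sum.inter_filter[symmetric])
    then show "(\<Sum>\<sigma>\<in>?VS. if compatible \<omega> \<sigma> then W \<tau> \<omega> * F \<sigma> \<omega> else 0) =
        W \<tau> \<omega> * (\<Sum>\<sigma>\<in>compatible_spins Q \<omega>. F \<sigma> \<omega>)"
      by (simp add: sum_distrib_left)
  qed
  also have "\<dots> = (\<Sum>\<omega>\<in>Pow ?E. percolation_weight Q Q' a b \<omega> * (\<Sum>\<sigma>\<in>compatible_spins Q \<omega>. F \<sigma> \<omega>))"
    by (simp add: percolation_weight_def W_def sum_distrib_right sum_divide_distrib)
  finally show ?thesis .
qed

lemma expect_percolation_event: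
  assumes "finite Q"
  shows "expect D \<alpha> \<phi> Q Q' a b (\<lambda>\<sigma> \<omega>. G \<omega>) =
    (\<Sum>\<omega>\<in>Pow (edges D \<alpha>). percolation_weight Q Q' a b \<omega> * (real (card (compatible_spins Q \<omega>)) * G \<omega>))"
  by (simp add: expect_eq_sum_percolation_weight[OF assms])

lemma expect_monomial:
  fixes v :: "nat \<Rightarrow> 'd set" and r :: "nat \<Rightarrow> nat"
  assumes Q: "finite Q" "Q \<noteq> {}" "uminus ` Q = Q" and v: "v ` {..<k} \<subseteq> verts D \<phi>"
  shows "expect D \<alpha> \<phi> Q Q' a b (\<lambda>\<sigma> \<omega>. \<Prod>j<k. \<sigma> (v j) ^ r j) =
            (\<Sum>P\<in>{P. partition_on (v ` {..<k}) P \<and>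
                       (\<forall>A\<in>P. even (\<Sum>j\<in>{j. j < k \<and> v j \<in> A}. r j))}.
               expect D \<alpha> \<phi> Q Q' a b
                 (\<lambda>\<sigma> \<omega>. if cluster_partition D \<alpha> \<phi> \<omega> (v ` {..<k}) = P then 1 else 0) *
               (\<Prod>A\<in>P. moment Q (\<Sum>j\<in>{j. j < k \<and> v j \<in> A}. r j)))"
    (is "_ = (\<Sum>P\<in>?G. _)")
proof -
  let ?S = "v ` {..<k}"
  define X where "X P = (\<Prod>A\<in>P. moment Q (\<Sum>j\<in>{j. j < k \<and> v j \<in> A}. r j))" for P
  define \<pi> where "\<pi> \<omega> = cluster_partition D \<alpha> \<phi> \<omega> ?S" for \<omega>
  define W where "W \<omega> = percolation_weight Q Q' a b \<omega> * real (card (compatible_spins Q \<omega>))" for \<omega>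
  have "finite ?G"
    by (rule finite_subset[of _ "Pow (Pow ?S)"]) (auto simp: partition_on_def)
  have odd_block: "X (\<pi> \<omega>) = 0" if "\<pi> \<omega> \<notin> ?G" for \<omega>
  proof -
    obtain A where A: "A \<in> \<pi> \<omega>" "odd (\<Sum>j\<in>{j. j < k \<and> v j \<in> A}. r j)"
      using \<open>\<pi> \<omega> \<notin> ?G\<close> partition_on_cluster_partition by (auto simp: \<pi>_def)
    have "finite (\<pi> \<omega>)" by (simp add: \<pi>_def cluster_partition_def)
    then show ?thesis
      unfolding X_def using A moment_odd_eq_0[OF Q(1,3) A(2)] by (intro prod_zero) auto
  qed
  have X_eq_sum: "X (\<pi> \<omega>) = (\<Sum>P\<in>?G. (if \<pi> \<omega> = P then 1 else 0) * X P)" for \<omega>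
    using odd_block[of \<omega>] \<open>finite ?G\<close> by (simp add: sum.delta' if_distrib[of "\<lambda>x. x * _"] cong: if_cong)
  have "expect D \<alpha> \<phi> Q Q' a b (\<lambda>\<sigma> \<omega>. \<Prod>j<k. \<sigma> (v j) ^ r j) = (\<Sum>\<omega>\<in>Pow (edges D \<alpha>). W \<omega> * X (\<pi> \<omega>))"
    by (simp add: expect_eq_sum_percolation_weight[OF Q(1)] sum_compatible_spins_monomial[OF Q(1) v]
        prod_clusters_eq_prod_cluster_partition[OF Q(1,2) v] W_def X_def \<pi>_def mult.assoc)
  also have "\<dots> = (\<Sum>P\<in>?G. \<Sum>\<omega>\<in>Pow (edges D \<alpha>). W \<omega> * ((if \<pi> \<omega> = P then 1 else 0) * X P))"
    by (simp add: X_eq_sum sum_distrib_left sum.swap[of _ "Pow (edges D \<alpha>)"])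
  also have "\<dots> = (\<Sum>P\<in>?G. expect D \<alpha> \<phi> Q Q' a b (\<lambda>\<sigma> \<omega>. if \<pi> \<omega> = P then 1 else 0) * X P)"
    by (simp add: expect_percolation_event[OF Q(1)] W_def sum_distrib_right mult.assoc)
  finally show ?thesis by (simp add: X_def \<pi>_def)
qed

lemma cluster_partition_doubleton_eq_iff:
  "cluster_partition D \<alpha> \<phi> \<omega> {u, w} = {{u, w}} \<longleftrightarrow> connected_in D \<alpha> \<phi> \<omega> u w"
  using connected_in_sym by (auto simp: cluster_partition_def connected_in_def)

lemma expect_two_point:
  assumes Q: "finite Q" "Q \<noteq> {}" "uminus ` Q = Q"
    and points: "v1 \<in> verts D \<phi>" "v2 \<in> verts D \<phi>" "v1 \<noteq> v2"
  shows "expect D \<alpha> \<phi> Q Q' a b (\<lambda>\<sigma> \<omega>. \<sigma> v1 * \<sigma> v2) =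
    moment Q 2 * expect D \<alpha> \<phi> Q Q' a b (\<lambda>\<sigma> \<omega>. if connected_in D \<alpha> \<phi> \<omega> v1 v2 then 1 else 0)"
proof -
  define v where "v j = (if j = 0 then v1 else v2)" for j :: nat
  have S: "v ` {..<2} = {v1, v2}"
    by (auto simp: v_def lessThan_Suc numeral_2_eq_2)
  have count: "(\<Sum>j\<in>{j. j < 2 \<and> v j \<in> A}. 1) = (if v1 \<in> A then 1 else 0) + (if v2 \<in> A then 1 else 0 :: nat)"
    for A
  proof -
    have "{j. j < 2 \<and> v j \<in> A} = {j \<in> {..<2}. v j \<in> A}" by auto
    then have "(\<Sum>j\<in>{j. j < 2 \<and> v j \<in> A}. 1) = (\<Sum>j<2. if v j \<in> A then 1 else 0 :: nat)"
      by (simp only: sum.inter_filter[OF finite_lessThan])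
    then show ?thesis by (simp add: v_def eval_nat_numeral)
  qed
  have even_partitions: "{P. partition_on {v1, v2} P \<and>
      (\<forall>A\<in>P. even ((if v1 \<in> A then 1 else 0) + (if v2 \<in> A then 1 else 0 :: nat)))} = {{{v1, v2}}}"
  proof (intro equalityI subsetI)
    fix P assume "P \<in> {P. partition_on {v1, v2} P \<and>
      (\<forall>A\<in>P. even ((if v1 \<in> A then 1 else 0) + (if v2 \<in> A then 1 else 0 :: nat)))}"
    then show "P \<in> {{{v1, v2}}}" using partition_on_doubleton_even_blocks[OF points(3)] by blast
  next
    fix P assume "P \<in> {{{v1, v2}}}"
    then show "P \<in> {P. partition_on {v1, v2} P \<and>
      (\<forall>A\<in>P. even ((if v1 \<in> A then 1 else 0) + (if v2 \<in> A then 1 else 0 :: nat)))}"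
      using partition_on_space[of "{v1, v2}"] by simp
  qed
  have "expect D \<alpha> \<phi> Q Q' a b (\<lambda>\<sigma> \<omega>. \<sigma> v1 * \<sigma> v2) =
      expect D \<alpha> \<phi> Q Q' a b (\<lambda>\<sigma> \<omega>. \<Prod>j<2. \<sigma> (v j) ^ 1)"
    by (simp add: v_def numeral_2_eq_2)
  also have "\<dots> = expect D \<alpha> \<phi> Q Q' a b (\<lambda>\<sigma> \<omega>. if cluster_partition D \<alpha> \<phi> \<omega> {v1, v2} = {{v1, v2}} then 1 else 0)
      * moment Q 2"
    using expect_monomial[OF Q, where v = v and k = 2 and r = "\<lambda>_. 1"] points
    unfolding S count even_partitions by (simp add: numeral_2_eq_2)
  finally show ?thesis by (simp add: cluster_partition_doubleton_eq_iff)
qed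

end

lemma comb_map_involutive_darts: "comb_map D \<alpha> \<phi> \<Longrightarrow> involutive_darts D \<alpha>"
  by unfold_locales (auto simp: comb_map_def bij_betw_def)

theorem proposition5p1:
  fixes D :: "'d set" and \<alpha> \<phi> :: "'d \<Rightarrow> 'd"
    and Q :: "real set" and Q' :: "complex set" and q q' :: nat and a b :: real
  assumes map: "comb_map D \<alpha> \<phi>"
    and Q: "finite Q" "card Q = q" "q \<ge> 1" "uminus ` Q = Q"
    and Q': "finite Q'" "card Q' = q'" "q' \<ge> 1" "uminus ` Q' = Q'"
    and ab: "0 < a" "a \<le> 1" "0 < b" "b \<le> 1"
  shows "(\<forall>(k::nat) (v::nat \<Rightarrow> 'd set) (r::nat \<Rightarrow> nat).
            inj_on v {..<k} \<and> v ` {..<k} \<subseteq> verts D \<phi> \<longrightarrow>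
            expect D \<alpha> \<phi> Q Q' a b (\<lambda>\<sigma> \<omega>. \<Prod>j<k. \<sigma> (v j) ^ r j) =
            (\<Sum>P\<in>{P. partition_on (v ` {..<k}) P \<and>
                       (\<forall>A\<in>P. even (\<Sum>j\<in>{j. j < k \<and> v j \<in> A}. r j))}.
               expect D \<alpha> \<phi> Q Q' a b
                 (\<lambda>\<sigma> \<omega>. if cluster_partition D \<alpha> \<phi> \<omega> (v ` {..<k}) = P then 1 else 0) *
               (\<Prod>A\<in>P. moment Q (\<Sum>j\<in>{j. j < k \<and> v j \<in> A}. r j))))
         \<and>
         (\<forall>v1\<in>verts D \<phi>. \<forall>v2\<in>verts D \<phi>. v1 \<noteq> v2 \<longrightarrow>
            expect D \<alpha> \<phi> Q Q' a b (\<lambda>\<sigma> \<omega>. \<sigma> v1 * \<sigma> v2) =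
            moment Q 2 * expect D \<alpha> \<phi> Q Q' a b
                           (\<lambda>\<sigma> \<omega>. if connected_in D \<alpha> \<phi> \<omega> v1 v2 then 1 else 0))"
proof -
  interpret involutive_darts D \<alpha> \<phi>
    using map by (rule comb_map_involutive_darts)
  have "Q \<noteq> {}" using Q(2,3) by auto
  then show ?thesis
    by (intro conjI allI impI ballI expect_monomial[OF Q(1) _ Q(4)] expect_two_point[OF Q(1) _ Q(4)])
      auto
qed

end
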